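(* Let $\mathcal X$ be a countable set with the discrete topology and let $\varepsilon\in(0,1]$. There exists a test $T$ mapping each $P\in\Delta^*_{BD}$ to an open subset $T(P)$ of $\Omega$ such that (i) $P(T(P))\le\varepsilon$ for every $P\in\Delta^*_{BD}$, and (ii) for every probability measure $\zeta$ on $\Delta^*_{BD}$ with finite support there is a cylinder $C_\zeta$ with $\zeta(\{P\in\Delta^*_{BD}:\omega\notin T(P)\})=0$ for every $\omega\in C_\zeta$.
   Context: $\Omega=\mathcal X^{\mathbb N}$ with the product topology; $\omega^t$ is the cylinder of paths agreeing with $\omega$ in the first $t$ coordinates ($\omega^0=\Omega$); $\mathcal H$ is the set of cylinders. $\Sigma$ is a $\sigma$-algebra containing all open sets; $\mathbb P$ the set of finitely additive probabilities on $(\Omega,\Sigma)$; $P\in\mathbb P$ is strongly nonatomic if for every $E\in\Sigma$, $\alpha\in[0,1]$ there is $F\in\Sigma$, $F\subseteq E$, with $P(F)=\alpha P(E)$. A conditional probability is a function $P:\Sigma\times\mathcal H\to[0,1]$ such that for every $t\ge0$, $\omega$: (1) $P(\cdot\mid\omega^t)\in\mathbb P$; (2) $P(\omega^t\mid\omega^t)=1$; (3) $P(E\cap\omega^{t+n}\mid\omega^t)=P(E\mid\omega^{t+n})P(\omega^{t+n}\mid\omega^t)$ for all $E$, $n\ge0$. It is a conditional opinion if $P(\cdot\mid\Omega)$ is strongly nonatomic. Write $P(E)=P(E\mid\Omega)$. For conditional probabilities $P,Q$, $P$ merges with $Q$ if for every $\varepsilon>0$, $\lim_{t\to\infty}Q(\{\omega:\sup_{E\in\Sigma}|P(E\mid\omega^t)-Q(E\mid\omega^t)|>\varepsilon\})=0$.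 For $Q,R\in\mathbb P$, $Q\ll R$ means $R(E_n)\to0$ implies $Q(E_n)\to0$ for every sequence in $\Sigma$. A conditional probability $P$ has the Blackwell–Dubins property if for every $Q\in\mathbb P$ with $Q\ll P(\cdot\mid\Omega)$ there is a conditional probability $\widetilde Q$ with $\widetilde Q(\cdot\mid\Omega)=Q$ such that $P$ merges with $\widetilde Q$. $\Delta^*_{BD}$ is the set of conditional opinions with the Blackwell–Dubins property. *)

theory Defs
  imports "HOL-Probability.Probability"
begin

type_synonym 'x path = "nat \<Rightarrow> 'x"
type_synonym 'x cprob = "'x path set \<Rightarrow> 'x path set \<Rightarrow> real"

definition cyl :: "'x path \<Rightarrow> nat \<Rightarrow> 'x path set" where
  "cyl \<omega> t = {\<omega>'. \<forall>i<t. \<omega>' i = \<omega> i}"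

definition cylinders :: "'x path set set" where
  "cylinders = {C. \<exists>\<omega> t. C = cyl \<omega> t}"

text \<open>Open sets of the product topology on X^N, X carrying the discrete topology.\<close>
definition open_paths :: "'x path set \<Rightarrow> bool" where
  "open_paths U \<longleftrightarrow> (\<forall>\<omega>\<in>U. \<exists>t. cyl \<omega> t \<subseteq> U)"

text \<open>Finitely additive probabilities on (Omega, Sigma); represented as functions that
  vanish outside Sigma.\<close>
definition fa_prob :: "'x path set set \<Rightarrow> ('x path set \<Rightarrow> real) \<Rightarrow> bool" where
  "fa_prob S P \<longleftrightarrow>
     (\<forall>E. E \<notin> S \<longrightarrow> P E = 0) \<and>
     (\<forall>E\<in>S. 0 \<le> P E) \<and> P UNIV = 1 \<and>
     (\<forall>E\<in>S. \<forall>F\<in>S. E \<inter> F = {} \<longrightarrow> P (E \<union> F) = P E + P F)"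

definition strongly_nonatomic :: "'x path set set \<Rightarrow> ('x path set \<Rightarrow> real) \<Rightarrow> bool" where
  "strongly_nonatomic S P \<longleftrightarrow>
     (\<forall>E\<in>S. \<forall>\<alpha>::real. 0 \<le> \<alpha> \<and> \<alpha> \<le> 1 \<longrightarrow> (\<exists>F\<in>S. F \<subseteq> E \<and> P F = \<alpha> * P E))"

text \<open>Conditional probability P : Sigma x H -> [0,1]; represented as a function vanishing
  outside Sigma x H.\<close>
definition cond_prob :: "'x path set set \<Rightarrow> 'x cprob \<Rightarrow> bool" where
  "cond_prob S P \<longleftrightarrow>
     (\<forall>E C. C \<notin> cylinders \<longrightarrow> P E C = 0) \<and>
     (\<forall>\<omega> t. fa_prob S (\<lambda>E. P E (cyl \<omega> t)) \<and>
             P (cyl \<omega> t) (cyl \<omega> t) = 1 \<and>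
             (\<forall>E\<in>S. \<forall>n. P (E \<inter> cyl \<omega> (t + n)) (cyl \<omega> t) =
                          P E (cyl \<omega> (t + n)) * P (cyl \<omega> (t + n)) (cyl \<omega> t)))"

definition cond_opinion :: "'x path set set \<Rightarrow> 'x cprob \<Rightarrow> bool" where
  "cond_opinion S P \<longleftrightarrow> cond_prob S P \<and> strongly_nonatomic S (\<lambda>E. P E UNIV)"

definition merges :: "'x path set set \<Rightarrow> 'x cprob \<Rightarrow> 'x cprob \<Rightarrow> bool" where
  "merges S P Q \<longleftrightarrow>
     (\<forall>\<epsilon>>0. (\<lambda>t. Q {\<omega>. (SUP E\<in>S. \<bar>P E (cyl \<omega> t) - Q E (cyl \<omega> t)\<bar>) > \<epsilon>} UNIV)
               \<longlonglongrightarrow> 0)"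

definition abs_cont :: "'x path set set \<Rightarrow> ('x path set \<Rightarrow> real) \<Rightarrow> ('x path set \<Rightarrow> real) \<Rightarrow> bool" where
  "abs_cont S Q R \<longleftrightarrow>
     (\<forall>En :: nat \<Rightarrow> 'x path set. range En \<subseteq> S \<longrightarrow>
        (\<lambda>n. R (En n)) \<longlonglongrightarrow> 0 \<longrightarrow> (\<lambda>n. Q (En n)) \<longlonglongrightarrow> 0)"

definition blackwell_dubins :: "'x path set set \<Rightarrow> 'x cprob \<Rightarrow> bool" where
  "blackwell_dubins S P \<longleftrightarrow>
     (\<forall>Q. fa_prob S Q \<and> abs_cont S Q (\<lambda>E. P E UNIV) \<longrightarrow>
        (\<exists>Q'. cond_prob S Q' \<and> (\<forall>E. Q' E UNIV = Q E) \<and> merges S P Q'))"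

definition Delta_BD :: "'x path set set \<Rightarrow> 'x cprob set" where
  "Delta_BD S = {P. cond_opinion S P \<and> blackwell_dubins S P}"

end

theory Submission
  imports Defs
begin

text \<open>
  Fix a path \<open>x\<close> and let \<open>T(P)\<close> be the first cylinder \<open>x\<^sup>t\<close> with \<open>P(x\<^sup>t) \<le> \<epsilon>\<close>.
  Finitely many such tests share the smallest of their cylinders, so everything rests on the
  existence of such a \<open>t\<close>: a Blackwell--Dubins opinion cannot keep mass bounded away from zero
  on the shrinking cylinders around a single path.
  If it did, repeated halving (strong nonatomicity) produces an event \<open>F\<close> such that both \<open>F\<close>
  and its complement keep mass bounded away from zero on all the cylinders \<open>x\<^sup>t\<close>.
  Conditioning on \<open>F\<close> gives a \<open>Q \<ll> P\<close> whose extension is certain of \<open>F\<close> on every \<open>x\<^sup>t\<close>,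
  while \<open>P\<close> keeps doubting \<open>F\<close> there; since \<open>Q\<close> also charges every \<open>x\<^sup>t\<close>, \<open>P\<close> cannot
  merge with it.
\<close>

lemma cyl_0 [simp]: "cyl \<omega> 0 = UNIV"
  by (simp add: cyl_def)

lemma decseq_cyl: "decseq (cyl \<omega>)"
  by (auto simp: decseq_def cyl_def)

lemma cyl_eq_if_mem: "\<omega>' \<in> cyl \<omega> t \<Longrightarrow> cyl \<omega>' t = cyl \<omega> t"
  by (auto simp: cyl_def)

lemma cyl_in_cylinders: "cyl \<omega> t \<in> cylinders"
  by (auto simp: cylinders_def)

lemma open_paths_cyl_determined: "open_paths {\<omega>. \<Phi> (cyl \<omega> t)}"
  unfolding open_paths_def
proof (intro ballI exI[of _ t] subsetI)
  fix \<omega> \<omega>' assume "\<omega> \<in> {\<omega>. \<Phi> (cyl \<omega> t)}" "\<omega>' \<in> cyl \<omega> t"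
  then show "\<omega>' \<in> {\<omega>. \<Phi> (cyl \<omega> t)}" by (simp add: cyl_eq_if_mem)
qed

lemma open_paths_cyl: "open_paths (cyl \<omega> t)"
  unfolding open_paths_def by (metis cyl_eq_if_mem order_refl)

lemma fa_prob_nonneg: "fa_prob S \<mu> \<Longrightarrow> 0 \<le> \<mu> E"
  unfolding fa_prob_def by (cases "E \<in> S") auto

lemma fa_prob_add:
  "fa_prob S \<mu> \<Longrightarrow> E \<in> S \<Longrightarrow> F \<in> S \<Longrightarrow> E \<inter> F = {} \<Longrightarrow> \<mu> (E \<union> F) = \<mu> E + \<mu> F"
  unfolding fa_prob_def by auto

lemma cond_prob_fa_prob: "cond_prob S P \<Longrightarrow> fa_prob S (\<lambda>E. P E (cyl \<omega> t))"
  unfolding cond_prob_def by auto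

lemma cond_prob_fa_prob_UNIV: "cond_prob S P \<Longrightarrow> fa_prob S (\<lambda>E. P E UNIV)"
  using cond_prob_fa_prob[of S P undefined 0] by simp

lemma cond_prob_chain_UNIV:
  "cond_prob S P \<Longrightarrow> E \<in> S \<Longrightarrow> P (E \<inter> cyl \<omega> t) UNIV = P E (cyl \<omega> t) * P (cyl \<omega> t) UNIV"
  unfolding cond_prob_def by (metis add_0 cyl_0)

locale path_algebra = algebra "UNIV :: 'x path set" S for S
begin

lemma Compl_in: "E \<in> S \<Longrightarrow> - E \<in> S"
  using compl_sets by (simp add: Compl_eq_Diff_UNIV)

lemma fa_prob_split:
  assumes "fa_prob S \<mu>" "E \<in> S" "F \<in> S"
  shows "\<mu> E = \<mu> (E \<inter> F) + \<mu> (E - F)"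
proof -
  have "\<mu> ((E \<inter> F) \<union> (E - F)) = \<mu> (E \<inter> F) + \<mu> (E - F)"
    by (rule fa_prob_add[OF assms(1) Int[OF assms(2,3)] Diff[OF assms(2,3)]]) blast
  moreover have "(E \<inter> F) \<union> (E - F) = E" by blast
  ultimately show ?thesis by simp
qed

lemma fa_prob_empty: "fa_prob S \<mu> \<Longrightarrow> \<mu> {} = 0"
  using fa_prob_add[of S \<mu> "{}" "{}"] by simp

lemma fa_prob_Compl: "fa_prob S \<mu> \<Longrightarrow> E \<in> S \<Longrightarrow> \<mu> (- E) = 1 - \<mu> E"
  using fa_prob_split[of \<mu> UNIV E] by (simp add: fa_prob_def Compl_eq_Diff_UNIV)

lemma fa_prob_mono: "fa_prob S \<mu> \<Longrightarrow> E \<in> S \<Longrightarrow> F \<in> S \<Longrightarrow> E \<subseteq> F \<Longrightarrow> \<mu> E \<le> \<mu> F"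
  using fa_prob_split[of \<mu> F E] fa_prob_nonneg[of S \<mu> "F - E"] by (simp add: Int_absorb1)

lemma fa_prob_le_1: "fa_prob S \<mu> \<Longrightarrow> \<mu> E \<le> 1"
  using fa_prob_mono[of \<mu> E UNIV] by (cases "E \<in> S") (auto simp: fa_prob_def)

lemma cond_prob_Int_cyl_le:
  assumes "cond_prob S P" "E \<in> S"
  shows "P (E \<inter> cyl \<omega> t) UNIV \<le> P E (cyl \<omega> t)"
  using cond_prob_chain_UNIV[OF assms] fa_prob_le_1[OF cond_prob_fa_prob_UNIV[OF assms(1)]]
    fa_prob_nonneg[OF cond_prob_fa_prob[OF assms(1)]]
  by (simp add: mult_left_le)

lemma abs_diff_le_SUP_cond_prob:
  assumes "cond_prob S P" "cond_prob S Q" "E \<in> S"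
  shows "\<bar>P E (cyl \<omega> t) - Q E (cyl \<omega> t)\<bar> \<le> (SUP E\<in>S. \<bar>P E (cyl \<omega> t) - Q E (cyl \<omega> t)\<bar>)"
proof (rule cSUP_upper[OF \<open>E \<in> S\<close>], rule bdd_aboveI2)
  have P: "fa_prob S (\<lambda>E. P E (cyl \<omega> t))" and Q: "fa_prob S (\<lambda>E. Q E (cyl \<omega> t))"
    using assms(1,2) by (simp_all add: cond_prob_fa_prob)
  show "\<bar>P E (cyl \<omega> t) - Q E (cyl \<omega> t)\<bar> \<le> 1" for E
    using fa_prob_nonneg[OF P, of E] fa_prob_le_1[OF P, of E] fa_prob_nonneg[OF Q, of E]
      fa_prob_le_1[OF Q, of E]
    by simp
qed

end

definition cond_on :: "'a set set \<Rightarrow> ('a set \<Rightarrow> real) \<Rightarrow> 'a set \<Rightarrow> 'a set \<Rightarrow> real" where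
  "cond_on S \<mu> F E = (if E \<in> S then \<mu> (E \<inter> F) / \<mu> F else 0)"

context path_algebra
begin

lemma fa_prob_cond_on:
  assumes \<mu>: "fa_prob S \<mu>" and "F \<in> S" "0 < \<mu> F"
  shows "fa_prob S (cond_on S \<mu> F)"
  unfolding fa_prob_def
proof (intro conjI ballI allI impI)
  fix E G assume "E \<in> S" "G \<in> S" "E \<inter> G = {}"
  then have "\<mu> ((E \<inter> F) \<union> (G \<inter> F)) = \<mu> (E \<inter> F) + \<mu> (G \<inter> F)"
    using \<open>F \<in> S\<close> by (intro fa_prob_add[OF \<mu>] Int) blast+
  moreover have "(E \<union> G) \<inter> F = (E \<inter> F) \<union> (G \<inter> F)" by blast
  ultimately show "cond_on S \<mu> F (E \<union> G) = cond_on S \<mu> F E + cond_on S \<mu> F G"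
    using \<open>E \<in> S\<close> \<open>G \<in> S\<close> Un[of E G] by (simp add: cond_on_def add_divide_distrib)
qed (use assms fa_prob_nonneg[OF \<mu>] in \<open>auto simp: cond_on_def\<close>)

lemma abs_cont_cond_on:
  assumes \<mu>: "fa_prob S \<mu>" and "F \<in> S" "0 < \<mu> F"
  shows "abs_cont S (cond_on S \<mu> F) \<mu>"
  unfolding abs_cont_def
proof (intro allI impI)
  fix En :: "nat \<Rightarrow> 'x path set"
  assume "range En \<subseteq> S" and "(\<lambda>n. \<mu> (En n)) \<longlonglongrightarrow> 0"
  then have lim: "(\<lambda>n. \<mu> (En n) / \<mu> F) \<longlonglongrightarrow> 0"
    using tendsto_divide_zero by blast
  have le: "cond_on S \<mu> F (En n) \<le> \<mu> (En n) / \<mu> F" for n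
  proof -
    have "En n \<in> S" using \<open>range En \<subseteq> S\<close> by blast
    then have "\<mu> (En n \<inter> F) \<le> \<mu> (En n)"
      using fa_prob_mono[OF \<mu>, of "En n \<inter> F" "En n"] \<open>F \<in> S\<close> by blast
    then show ?thesis
      using \<open>0 < \<mu> F\<close> \<open>En n \<in> S\<close> by (simp add: cond_on_def divide_right_mono)
  qed
  show "(\<lambda>n. cond_on S \<mu> F (En n)) \<longlonglongrightarrow> 0"
  proof (rule tendsto_sandwich[OF _ _ tendsto_const lim])
    show "\<forall>\<^sub>F n in sequentially. 0 \<le> cond_on S \<mu> F (En n)"
      using fa_prob_nonneg[OF fa_prob_cond_on[OF assms]] by simp
    show "\<forall>\<^sub>F n in sequentially. cond_on S \<mu> F (En n) \<le> \<mu> (En n) / \<mu> F"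
      using le by simp
  qed
qed

lemma cond_prob_eq_1_of_cond_on:
  assumes Q: "cond_prob S Q" and Q_UNIV: "\<And>E. Q E UNIV = cond_on S \<mu> F E"
    and \<mu>: "fa_prob S \<mu>" and "F \<in> S" "cyl \<omega> t \<in> S" and pos: "0 < \<mu> (F \<inter> cyl \<omega> t)"
  shows "Q F (cyl \<omega> t) = 1"
proof -
  have "F \<inter> cyl \<omega> t \<in> S" using assms(4,5) by (rule Int)
  moreover have "\<mu> (F \<inter> cyl \<omega> t) \<le> \<mu> F"
    using fa_prob_mono[OF \<mu> calculation \<open>F \<in> S\<close>] by blast
  ultimately have "0 < Q (F \<inter> cyl \<omega> t) UNIV" and "Q (F \<inter> cyl \<omega> t) UNIV = Q (cyl \<omega> t) UNIV"
    using assms(5) pos by (simp_all add: Q_UNIV cond_on_def Int_commute)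
  then show ?thesis
    using cond_prob_chain_UNIV[OF Q \<open>F \<in> S\<close>, of \<omega> t] by simp
qed

end

definition heavy_along :: "('a set \<Rightarrow> real) \<Rightarrow> (nat \<Rightarrow> 'a set) \<Rightarrow> 'a set \<Rightarrow> bool" where
  "heavy_along \<mu> C F \<longleftrightarrow> (\<exists>\<alpha>>0. \<forall>t. \<alpha> \<le> \<mu> (F \<inter> C t))"

lemma not_heavy_along_iff: "\<not> heavy_along \<mu> C F \<longleftrightarrow> (\<forall>a>0. \<exists>t. \<mu> (F \<inter> C t) < a)"
  unfolding heavy_along_def by (auto simp: not_le)

context path_algebra
begin

lemma heavy_along_Un:
  assumes \<mu>: "fa_prob S \<mu>" and C: "\<And>t. C t \<in> S" "decseq C"
    and FG: "F \<in> S" "G \<in> S" "F \<inter> G = {}" and "heavy_along \<mu> C (F \<union> G)"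
  shows "heavy_along \<mu> C F \<or> heavy_along \<mu> C G"
proof (rule ccontr)
  assume "\<not> ?thesis"
  then have light: "\<forall>a>0. \<exists>t. \<mu> (F \<inter> C t) < a" "\<forall>a>0. \<exists>t. \<mu> (G \<inter> C t) < a"
    by (simp_all add: not_heavy_along_iff)
  obtain \<alpha> where "0 < \<alpha>" and \<alpha>: "\<And>t. \<alpha> \<le> \<mu> ((F \<union> G) \<inter> C t)"
    using \<open>heavy_along \<mu> C (F \<union> G)\<close> unfolding heavy_along_def by blast
  have "0 < \<alpha> / 2" using \<open>0 < \<alpha>\<close> by simp
  then obtain t1 t2 where t1: "\<mu> (F \<inter> C t1) < \<alpha> / 2" and t2: "\<mu> (G \<inter> C t2) < \<alpha> / 2"
    using light by blast
  define t where "t = max t1 t2"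
  have antimono: "\<mu> (H \<inter> C s') \<le> \<mu> (H \<inter> C s)" if "H \<in> S" "s \<le> s'" for H s s'
  proof (rule fa_prob_mono[OF \<mu>])
    show "H \<inter> C s' \<subseteq> H \<inter> C s"
      using \<open>decseq C\<close> \<open>s \<le> s'\<close> by (auto simp: decseq_def)
  qed (use that C(1) in auto)
  have "\<mu> ((F \<inter> C t) \<union> (G \<inter> C t)) = \<mu> (F \<inter> C t) + \<mu> (G \<inter> C t)"
    using FG C(1) by (intro fa_prob_add[OF \<mu>] Int) blast+
  moreover have "(F \<union> G) \<inter> C t = (F \<inter> C t) \<union> (G \<inter> C t)" by blast
  ultimately have "\<mu> ((F \<union> G) \<inter> C t) = \<mu> (F \<inter> C t) + \<mu> (G \<inter> C t)" by simp
  also have "\<dots> < \<alpha>"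
    using antimono[of F t1 t] antimono[of G t2 t] t1 t2 FG by (simp add: t_def)
  finally show False using \<alpha>[of t] by simp
qed

lemma exists_half_power_with_light_Compl:
  assumes \<mu>: "fa_prob S \<mu>" and nonatomic: "strongly_nonatomic S \<mu>"
    and C: "\<And>t. C t \<in> S" "decseq C"
    and no_split: "\<And>F. F \<in> S \<Longrightarrow> heavy_along \<mu> C F \<Longrightarrow> \<not> heavy_along \<mu> C (- F)"
  shows "\<exists>F\<in>S. \<mu> F = (1/2) ^ k \<and> \<not> heavy_along \<mu> C (- F)"
proof (induction k)
  case 0
  have "\<not> heavy_along \<mu> C {}"
    using fa_prob_empty[OF \<mu>] by (simp add: not_heavy_along_iff)
  then show ?case
    using \<mu> by (auto simp: fa_prob_def intro!: bexI[of _ UNIV])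
next
  case (Suc k)
  then obtain F where F: "F \<in> S" "\<mu> F = (1/2) ^ k" "\<not> heavy_along \<mu> C (- F)"
    by blast
  have "\<forall>a::real. 0 \<le> a \<and> a \<le> 1 \<longrightarrow> (\<exists>G\<in>S. G \<subseteq> F \<and> \<mu> G = a * \<mu> F)"
    using nonatomic F(1) unfolding strongly_nonatomic_def by blast
  then obtain F' where F': "F' \<in> S" "F' \<subseteq> F" "\<mu> F' = 1/2 * \<mu> F"
    by (auto dest: spec[of _ "1/2"])
  show ?case
  proof (cases "heavy_along \<mu> C (- F')")
    case False
    then show ?thesis using F' F(2) by auto
  next
    case True
    then have "\<not> heavy_along \<mu> C F'"
      using no_split[OF Compl_in[OF F'(1)]] by simp
    then have "\<not> heavy_along \<mu> C (- F \<union> F')"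
      using heavy_along_Un[OF \<mu> C Compl_in[OF F(1)] F'(1)] F(3) F'(2) by blast
    moreover have "- (F - F') = - F \<union> F'" by blast
    moreover have "\<mu> (F - F') = (1/2) ^ Suc k"
      using fa_prob_split[OF \<mu> F(1) F'(1)] F(2) F'(3) Int_absorb1[OF \<open>F' \<subseteq> F\<close>] by (simp add: Int_commute)
    ultimately show ?thesis using F(1) F'(1) by (metis Diff)
  qed
qed

lemma exists_heavy_along_split:
  assumes \<mu>: "fa_prob S \<mu>" and nonatomic: "strongly_nonatomic S \<mu>"
    and C: "\<And>t. C t \<in> S" "decseq C"
    and "0 < \<epsilon>" and heavy: "\<And>t. \<epsilon> < \<mu> (C t)"
  shows "\<exists>F\<in>S. heavy_along \<mu> C F \<and> heavy_along \<mu> C (- F)"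
proof (rule ccontr)
  assume "\<not> ?thesis"
  then have no_split: "\<And>F. F \<in> S \<Longrightarrow> heavy_along \<mu> C F \<Longrightarrow> \<not> heavy_along \<mu> C (- F)"
    by blast
  obtain k where "(1/2) ^ k < \<epsilon>"
    using real_arch_pow_inv[OF \<open>0 < \<epsilon>\<close>, of "1/2"] by auto
  then obtain F where F: "F \<in> S" "\<mu> F < \<epsilon>" "\<not> heavy_along \<mu> C (- F)"
    using exists_half_power_with_light_Compl[OF \<mu> nonatomic C no_split, of k] by auto
  moreover have "0 < \<epsilon> - \<mu> F" using F(2) by simp
  ultimately obtain t where t: "\<mu> (- F \<inter> C t) < \<epsilon> - \<mu> F"
    unfolding not_heavy_along_iff by blast
  have "\<mu> (C t) = \<mu> (C t \<inter> F) + \<mu> (- F \<inter> C t)"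
    using fa_prob_split[OF \<mu> C(1) F(1), of t] by (simp add: Diff_eq Int_commute)
  also have "\<dots> < \<epsilon>"
    using fa_prob_mono[OF \<mu> Int[OF C(1) F(1)] F(1), of t] t by auto
  finally show False using heavy[of t] by simp
qed

end

locale path_events = path_algebra +
  assumes open_in_events: "open_paths U \<Longrightarrow> U \<in> S"
begin

lemma cyl_in_events: "cyl \<omega> t \<in> S"
  using open_in_events open_paths_cyl by blast

lemma blackwell_dubins_no_split:
  assumes P: "cond_prob S P" "blackwell_dubins S P" and "F \<in> S"
    and heavy: "heavy_along (\<lambda>E. P E UNIV) (cyl x) F" "heavy_along (\<lambda>E. P E UNIV) (cyl x) (- F)"
  shows False
proof -
  let ?\<mu> = "\<lambda>E. P E UNIV"
  have \<mu>: "fa_prob S ?\<mu>" using cond_prob_fa_prob_UNIV[OF P(1)] .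
  obtain \<alpha> where "0 < \<alpha>" and \<alpha>: "\<And>t. \<alpha> \<le> ?\<mu> (F \<inter> cyl x t)"
    using heavy(1) unfolding heavy_along_def by blast
  obtain \<beta> where "0 < \<beta>" and \<beta>: "\<And>t. \<beta> \<le> ?\<mu> (- F \<inter> cyl x t)"
    using heavy(2) unfolding heavy_along_def by blast
  have "0 < ?\<mu> F" using \<alpha>[of 0] \<open>0 < \<alpha>\<close> by simp
  obtain Q where Q: "cond_prob S Q" "\<And>E. Q E UNIV = cond_on S ?\<mu> F E" and "merges S P Q"
    using P(2) fa_prob_cond_on[OF \<mu> \<open>F \<in> S\<close> \<open>0 < ?\<mu> F\<close>] abs_cont_cond_on[OF \<mu> \<open>F \<in> S\<close> \<open>0 < ?\<mu> F\<close>]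
    unfolding blackwell_dubins_def by blast
  define A where "A t = {\<omega>. \<beta> / 2 < (SUP E\<in>S. \<bar>P E (cyl \<omega> t) - Q E (cyl \<omega> t)\<bar>)}" for t
  have A: "A t \<in> S" for t
    unfolding A_def by (rule open_in_events[OF open_paths_cyl_determined])
  have gap: "\<beta> \<le> \<bar>P F (cyl x t) - Q F (cyl x t)\<bar>" for t
  proof -
    have "Q F (cyl x t) = 1"
      using cond_prob_eq_1_of_cond_on[OF Q \<mu> \<open>F \<in> S\<close> cyl_in_events] \<alpha>[of t] \<open>0 < \<alpha>\<close> by simp
    moreover have "P F (cyl x t) = 1 - P (- F) (cyl x t)"
      using fa_prob_Compl[OF cond_prob_fa_prob[OF P(1)] \<open>F \<in> S\<close>] by simp
    moreover have "\<beta> \<le> P (- F) (cyl x t)"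
      using cond_prob_Int_cyl_le[OF P(1) Compl_in[OF \<open>F \<in> S\<close>], of x t] \<beta>[of t] by linarith
    ultimately show ?thesis by simp
  qed
  have "cyl x t \<subseteq> A t" for t
  proof
    fix \<omega> assume "\<omega> \<in> cyl x t"
    then show "\<omega> \<in> A t"
      using gap[of t] abs_diff_le_SUP_cond_prob[OF P(1) Q(1) \<open>F \<in> S\<close>, of x t] \<open>0 < \<beta>\<close>
      by (simp add: A_def cyl_eq_if_mem)
  qed
  have "\<alpha> / ?\<mu> F \<le> Q (A t) UNIV" for t
  proof -
    have "?\<mu> (cyl x t \<inter> F) \<le> ?\<mu> (A t \<inter> F)"
      using fa_prob_mono[OF \<mu> Int[OF cyl_in_events \<open>F \<in> S\<close>] Int[OF A \<open>F \<in> S\<close>]]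
        \<open>cyl x t \<subseteq> A t\<close> by blast
    then have "\<alpha> \<le> ?\<mu> (A t \<inter> F)"
      using \<alpha>[of t] by (simp add: Int_commute)
    then show ?thesis
      using A[of t] \<open>0 < ?\<mu> F\<close> by (simp add: Q(2) cond_on_def divide_right_mono)
  qed
  moreover have "(\<lambda>t. Q (A t) UNIV) \<longlonglongrightarrow> 0"
    using \<open>merges S P Q\<close> \<open>0 < \<beta>\<close> unfolding merges_def A_def by (meson half_gt_zero)
  ultimately have "\<alpha> / ?\<mu> F \<le> 0"
    by (intro LIMSEQ_le_const) auto
  then show False using \<open>0 < \<alpha>\<close> \<open>0 < ?\<mu> F\<close> by (simp add: divide_le_0_iff)
qed

lemma Delta_BD_cyl_small:
  assumes "P \<in> Delta_BD S" "0 < \<epsilon>"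
  shows "\<exists>t. P (cyl x t) UNIV \<le> \<epsilon>"
proof (rule ccontr)
  assume "\<not> ?thesis"
  moreover have "cond_prob S P" "strongly_nonatomic S (\<lambda>E. P E UNIV)" "blackwell_dubins S P"
    using assms(1) by (simp_all add: Delta_BD_def cond_opinion_def)
  ultimately obtain F where "F \<in> S" "heavy_along (\<lambda>E. P E UNIV) (cyl x) F"
      "heavy_along (\<lambda>E. P E UNIV) (cyl x) (- F)"
    using exists_heavy_along_split[OF cond_prob_fa_prob_UNIV _ cyl_in_events decseq_cyl \<open>0 < \<epsilon>\<close>]
    by (meson not_le)
  then show False
    using blackwell_dubins_no_split \<open>cond_prob S P\<close> \<open>blackwell_dubins S P\<close> by blast
qed

end

definition cyl_test :: "'x path \<Rightarrow> real \<Rightarrow> 'x cprob \<Rightarrow> 'x path set" where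
  "cyl_test x \<epsilon> P = cyl x (LEAST t. P (cyl x t) UNIV \<le> \<epsilon>)"

lemma open_paths_cyl_test: "open_paths (cyl_test x \<epsilon> P)"
  unfolding cyl_test_def by (rule open_paths_cyl)

lemma (in path_events) cyl_test_small:
  "P \<in> Delta_BD S \<Longrightarrow> 0 < \<epsilon> \<Longrightarrow> P (cyl_test x \<epsilon> P) UNIV \<le> \<epsilon>"
  unfolding cyl_test_def by (rule LeastI_ex) (rule Delta_BD_cyl_small)

lemma finite_cyl_tests_common_cylinder:
  assumes "finite Z"
  shows "\<exists>C\<in>cylinders. \<forall>\<omega>\<in>C. \<forall>P\<in>Z. \<omega> \<in> cyl_test x \<epsilon> P"
proof
  let ?N = "Max ((\<lambda>P. LEAST t. P (cyl x t) UNIV \<le> \<epsilon>) ` Z)"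
  show "cyl x ?N \<in> cylinders" by (rule cyl_in_cylinders)
  show "\<forall>\<omega>\<in>cyl x ?N. \<forall>P\<in>Z. \<omega> \<in> cyl_test x \<epsilon> P"
    using assms decseq_cyl[of x] unfolding cyl_test_def decseq_def by (meson Max_ge finite_imageI image_eqI subsetD)
qed

theorem theorem6:
  fixes S :: "('x::countable) path set set" and \<epsilon> :: real
  assumes "sigma_algebra UNIV S"
    and "\<forall>U. open_paths U \<longrightarrow> U \<in> S"
    and "0 < \<epsilon>" and "\<epsilon> \<le> 1"
  shows "\<exists>T :: 'x cprob \<Rightarrow> 'x path set.
           (\<forall>P\<in>Delta_BD S. open_paths (T P)) \<and>
           (\<forall>P\<in>Delta_BD S. P (T P) UNIV \<le> \<epsilon>) \<and>
           (\<forall>\<zeta> :: 'x cprob pmf. finite (set_pmf \<zeta>) \<and> set_pmf \<zeta> \<subseteq> Delta_BD S \<longrightarrow>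
              (\<exists>C\<in>cylinders. \<forall>\<omega>\<in>C.
                 measure_pmf.prob \<zeta> {P\<in>Delta_BD S. \<omega> \<notin> T P} = 0))"
proof (intro exI conjI ballI allI impI)
  \<comment> \<open>Any base path works.\<close>
  interpret path_events S
    using assms(1,2) by (simp add: path_events_def path_events_axioms_def path_algebra_def sigma_algebra_def)
  let ?T = "cyl_test undefined \<epsilon>"
  show "open_paths (?T P)" for P
    by (rule open_paths_cyl_test)
  show "P (?T P) UNIV \<le> \<epsilon>" if "P \<in> Delta_BD S" for P
    using cyl_test_small[OF that \<open>0 < \<epsilon>\<close>] .
  show "\<exists>C\<in>cylinders. \<forall>\<omega>\<in>C. measure_pmf.prob \<zeta> {P\<in>Delta_BD S. \<omega> \<notin> ?T P} = 0"
    if "finite (set_pmf \<zeta>) \<and> set_pmf \<zeta> \<subseteq> Delta_BD S" for \<zeta> :: "'x cprob pmf"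
    using finite_cyl_tests_common_cylinder[of "set_pmf \<zeta>" undefined \<epsilon>] that
    by (auto simp: measure_pmf_zero_iff)
qed

end
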